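(* Let $r,s$ be real numbers with $s, r^2 \in \mathbb{Q}$ and $s \geq 3\sqrt{3}\, r > 0$. Let $C_{r,s}$ be the plane curve $$C_{r,s}\colon\ s(xy - r^2) = x^2 y + x y^2 .$$ Then the assignment $$(x_0,y_0) \mapsto (x_0+y_0,\ s-x_0,\ s-y_0)$$ is a bijection from the set of rational points $(x_0,y_0) \in \mathbb{Q}^2$ on $C_{r,s}$ with $x_0>0$ and $y_0>0$ onto the set of ordered triples $(\ell_1,\ell_2,\ell_3)$ of side lengths of rational Euclidean triangles having semiperimeter $s$ and inradius $r$.
   Context: A Euclidean triangle is called rational if its three side lengths $\ell_1,\ell_2,\ell_3$ are rational numbers. Its semiperimeter is $s=(\ell_1+\ell_2+\ell_3)/2$ and its inradius $r$ is the radius of its inscribed circle. "Sequences of side lengths" means ordered triples $(\ell_1,\ell_2,\ell_3)$ of positive reals that are the side lengths of a (nondegenerate) triangle. *)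

theory Defs
  imports Complex_Main
begin

definition is_triangle :: "real \<times> real \<times> real \<Rightarrow> bool" where
  "is_triangle t = (case t of (a, b, c) \<Rightarrow>
     a > 0 \<and> b > 0 \<and> c > 0 \<and> a < b + c \<and> b < a + c \<and> c < a + b)"

definition rational_triangle :: "real \<times> real \<times> real \<Rightarrow> bool" where
  "rational_triangle t = (is_triangle t \<and>
     (case t of (a, b, c) \<Rightarrow> a \<in> \<rat> \<and> b \<in> \<rat> \<and> c \<in> \<rat>))"

definition semiperimeter :: "real \<times> real \<times> real \<Rightarrow> real" where
  "semiperimeter t = (case t of (a, b, c) \<Rightarrow> (a + b + c) / 2)"

definition tri_area :: "real \<times> real \<times> real \<Rightarrow> real" where
  "tri_area t = (case t of (a, b, c) \<Rightarrow>
     (let p = (a + b + c) / 2 in sqrt (p * (p - a) * (p - b) * (p - c))))"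

definition inradius :: "real \<times> real \<times> real \<Rightarrow> real" where
  "inradius t = tri_area t / semiperimeter t"

end

theory Submission
  imports Defs
begin

text \<open>Writing the sides as \<open>(x + y, s - x, s - y)\<close> (Ravi substitution) makes the triangle
  inequalities read \<open>x > 0\<close>, \<open>y > 0\<close>, \<open>x + y < s\<close>, and Heron's formula gives
  \<open>r\<^sup>2 s\<^sup>2 = s x y (s - x - y)\<close>, i.e. \<open>x y (s - x - y) = s r\<^sup>2\<close>, which is the equation of
  \<open>C\<^sub>r\<^sub>,\<^sub>s\<close>. Since \<open>s r\<^sup>2 > 0\<close>, every point of the curve with \<open>x, y > 0\<close> also has
  \<open>x + y < s\<close>, so it yields a genuine triangle.\<close>

lemma is_triangle_ravi_iff:
  "is_triangle (x + y, s - x, s - y) \<longleftrightarrow> x > 0 \<and> y > 0 \<and> x + y < s"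
  unfolding is_triangle_def by auto

lemma semiperimeter_ravi: "semiperimeter (x + y, s - x, s - y) = s"
  unfolding semiperimeter_def by simp

lemma tri_area_ravi: "tri_area (x + y, s - x, s - y) = sqrt (s * (x * y * (s - x - y)))"
proof -
  have "s * (s - (x + y)) * (s - (s - x)) * (s - (s - y)) = s * (x * y * (s - x - y))"
    by (simp add: algebra_simps)
  then show ?thesis
    unfolding tri_area_def Let_def by simp
qed

lemma sqrt_eq_pos_iff:
  fixes p c :: real
  assumes "c > 0"
  shows "sqrt p = c \<longleftrightarrow> p = c ^ 2"
  using assms by (auto simp: real_sqrt_unique)

lemma inradius_ravi_eq_iff:
  fixes r s x y :: real
  assumes "s > 0" and "r > 0"
  shows "inradius (x + y, s - x, s - y) = r \<longleftrightarrow> x * y * (s - x - y) = s * r ^ 2"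
proof -
  have "inradius (x + y, s - x, s - y) = r \<longleftrightarrow> sqrt (s * (x * y * (s - x - y))) = r * s"
    unfolding inradius_def tri_area_ravi semiperimeter_ravi using assms by (auto simp: field_simps)
  also have "\<dots> \<longleftrightarrow> s * (x * y * (s - x - y)) = s * (s * r ^ 2)"
    using assms by (simp add: sqrt_eq_pos_iff power2_eq_square algebra_simps)
  also have "\<dots> \<longleftrightarrow> x * y * (s - x - y) = s * r ^ 2"
    using assms by simp
  finally show ?thesis .
qed

lemma curve_eq_iff:
  fixes r s x y :: real
  shows "s * (x * y - r ^ 2) = x ^ 2 * y + x * y ^ 2 \<longleftrightarrow> x * y * (s - x - y) = s * r ^ 2"
  by (auto simp: power2_eq_square algebra_simps)

lemma ravi_rational_triangle_inradius_iff:
  fixes r s x y :: real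
  assumes "s \<in> \<rat>" and "s > 0" and "r > 0"
  shows "rational_triangle (x + y, s - x, s - y) \<and> inradius (x + y, s - x, s - y) = r \<longleftrightarrow>
         x \<in> \<rat> \<and> y \<in> \<rat> \<and> x > 0 \<and> y > 0 \<and> s * (x * y - r ^ 2) = x ^ 2 * y + x * y ^ 2"
    (is "?lhs \<longleftrightarrow> ?rhs")
proof
  assume ?lhs
  then have "s - x \<in> \<rat>" "s - y \<in> \<rat>"
    unfolding rational_triangle_def by auto
  then have "x \<in> \<rat>" "y \<in> \<rat>"
    using Rats_diff[OF assms(1), of "s - x"] Rats_diff[OF assms(1), of "s - y"] by simp_all
  with \<open>?lhs\<close> show ?rhs
    unfolding rational_triangle_def is_triangle_ravi_iff curve_eq_iff
      inradius_ravi_eq_iff[OF assms(2,3)] by auto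
next
  assume ?rhs
  then have "x * y * (s - x - y) > 0"
    using assms(2,3) by (simp add: curve_eq_iff)
  moreover have "x * y > 0"
    using \<open>?rhs\<close> by simp
  ultimately have "x + y < s"
    by (simp add: zero_less_mult_iff)
  with \<open>?rhs\<close> assms(1) show ?lhs
    unfolding rational_triangle_def is_triangle_ravi_iff curve_eq_iff
      inradius_ravi_eq_iff[OF assms(2,3)] by auto
qed

lemma ravi_of_semiperimeter:
  assumes "semiperimeter (a, b, c) = s"
  shows "(a, b, c) = ((s - b) + (s - c), s - (s - b), s - (s - c))"
  using assms unfolding semiperimeter_def by auto

theorem theorem1:
  fixes r s :: real
  assumes "s \<in> \<rat>" and "r ^ 2 \<in> \<rat>" and "s \<ge> 3 * sqrt 3 * r" and "r > 0"
  shows "bij_betw (\<lambda>(x, y). (x + y, s - x, s - y))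
           {(x, y). x \<in> \<rat> \<and> y \<in> \<rat> \<and> x > 0 \<and> y > 0 \<and>
                    s * (x * y - r ^ 2) = x ^ 2 * y + x * y ^ 2}
           {t. rational_triangle t \<and> semiperimeter t = s \<and> inradius t = r}"
proof -
  have "s > 0"
    using assms(3,4) by (smt (verit) mult_pos_pos real_sqrt_gt_0_iff)
  note member_iff = ravi_rational_triangle_inradius_iff[OF assms(1) \<open>s > 0\<close> assms(4)]
  have "rational_triangle (x + y, s - x, s - y) \<and> semiperimeter (x + y, s - x, s - y) = s \<and>
        inradius (x + y, s - x, s - y) = r"
    if "x \<in> \<rat>" "y \<in> \<rat>" "x > 0" "y > 0" "s * (x * y - r ^ 2) = x ^ 2 * y + x * y ^ 2"
    for x y
    using that member_iff semiperimeter_ravi by blast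
  moreover have "t \<in> (\<lambda>(x, y). (x + y, s - x, s - y)) ` {(x, y). x \<in> \<rat> \<and> y \<in> \<rat> \<and> x > 0 \<and> y > 0 \<and>
                    s * (x * y - r ^ 2) = x ^ 2 * y + x * y ^ 2}"
    if "rational_triangle t" "semiperimeter t = s" "inradius t = r" for t
  proof -
    obtain a b c where t: "t = (a, b, c)"
      by (cases t) auto
    then have "t = ((s - b) + (s - c), s - (s - b), s - (s - c))"
      using ravi_of_semiperimeter that(2) by blast
    with that member_iff[of "s - b" "s - c"] show ?thesis
      by (auto intro!: image_eqI[where x = "(s - b, s - c)"])
  qed
  ultimately show ?thesis
    unfolding bij_betw_def inj_on_def by auto
qed

end
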